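(* Let $S$ be an instance of 3-Partition (with $n_1\ge\cdots\ge n_{3m}$) and let $w_S=\mathrm{Load}_S\,\mathrm{Dist}_S\,\mathrm{Ver}_S$ be the string defined below. Then every accepting computation $\varepsilon\,\|\,w_S\vdash^*\varepsilon\,\|\,\varepsilon$ of the queue automaton begins as $$\varepsilon\,\|\,w_S \vdash^* e_0(b^{2B}e)^m\,\|\,\mathrm{Dist}_S\,\mathrm{Ver}_S,$$ and in the subsequent part of the computation, for each $i=1,\dots,m$, the $i$-th occurrence of the subword $(a_1b^Ba_2)^3$ in $\mathrm{Dist}_S$ is consumed by the $i$-th occurrence of $b^{2B}$ in the queue.
   Context: Queue automaton: a configuration is written $Q\,\|\,x$ ($Q$ = queue contents, $x$ = remaining input); a step from $Q\,\|\,\sigma x$ ($\sigma$ a symbol) goes either to $Q\sigma\,\|\,x$ (push) or, if $Q=\sigma Q'$, to $Q'\,\|\,x$ (match/pop). $\vdash^*$ is zero or more steps; $\varepsilon$ is the empty string; an accepting computation of $w$ is a computation $\varepsilon\,\|\,w\vdash^*\varepsilon\,\|\,\varepsilon$. If a computation passes through $u_1u_2u_3\,\|\,x_1x_2x_3\vdash^* u_2u_3z_1\,\|\,x_2x_3\vdash^* u_3z_1z_2\,\|\,x_3$, then $x_2$ is consumed by $u_2$ (with resultant $z_2$). An instance of 3-Partition is a sequence $S=\langle n_i:1\le i\le 3m\rangle$ of natural numbers such that $B=(\sum_{i=1}^{3m}n_i)/m$ is an integer and $B/4<n_i<B/2$ for all $i$; throughout, the $n_i$ are assumed to be in non-increasing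 order. The alphabet is $\{a_1,a_2,b,e_0,e,c_1,c_2,x,y\}$; $u^i$ denotes $i$ concatenated copies of $u$ and $\prod_{\ell=1}^k u_\ell=u_1u_2\cdots u_k$. Define $U_\ell=a_1^2b^\ell a_2^2$, $v_\ell=c_1x^\ell y^\ell c_2$, $D_k=U_{n_k}^{3m-k+1}$, $E_k=U_B^{3m-k}\,a_1b^{n_k}a_2\,U_B^{3m-k}$, $F_k=U_B^{2(3m-k)}$, and $\mathrm{Load}_S=e_0\prod_{i=1}^m(b^{2B}e)$, $\mathrm{Dist}_S=e_0\prod_{i=1}^m((a_1b^Ba_2)^3e)$, $\mathrm{Ver}_S=\prod_{k=1}^{3m}[v_{4k-3}D_kv_{4k-3}\,v_{4k-2}D_kv_{4k-2}\,v_{4k-1}E_kv_{4k-1}\,v_{4k}F_kv_{4k}]$, and $w_S=\mathrm{Load}_S\mathrm{Dist}_S\mathrm{Ver}_S$. *)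

theory Defs
  imports Main
begin

datatype sym = A1 | A2 | Bs | E0 | Ee | C1 | C2 | Xs | Ys

type_synonym config = "sym list \<times> sym list"  (* (queue contents Q, remaining input x) *)

inductive qstep :: "config \<Rightarrow> config \<Rightarrow> bool" where
  push:  "qstep (Q, \<sigma> # x) (Q @ [\<sigma>], x)"
| match: "qstep (\<sigma> # Q', \<sigma> # x) (Q', x)"

definition is_computation :: "config list \<Rightarrow> bool" where
  "is_computation cs \<longleftrightarrow> cs \<noteq> [] \<and> (\<forall>i. Suc i < length cs \<longrightarrow> qstep (cs ! i) (cs ! Suc i))"

definition accepting_computation :: "sym list \<Rightarrow> config list \<Rightarrow> bool" where
  "accepting_computation w cs \<longleftrightarrow> is_computation cs \<and> hd cs = ([], w) \<and> last cs = ([], [])"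

definition consumed_by :: "config list \<Rightarrow> sym list \<Rightarrow> sym list \<Rightarrow> sym list
    \<Rightarrow> sym list \<Rightarrow> sym list \<Rightarrow> sym list \<Rightarrow> bool" where
  "consumed_by cs u1 u2 u3 x1 x2 x3 \<longleftrightarrow>
     (\<exists>i j k z1 z2. i \<le> j \<and> j \<le> k \<and> k < length cs \<and>
        cs ! i = (u1 @ u2 @ u3, x1 @ x2 @ x3) \<and>
        cs ! j = (u2 @ u3 @ z1, x2 @ x3) \<and>
        cs ! k = (u3 @ z1 @ z2, x3))"

definition pw :: "sym list \<Rightarrow> nat \<Rightarrow> sym list" where
  "pw u i = concat (replicate i u)"

definition three_partition_instance :: "(nat \<Rightarrow> nat) \<Rightarrow> nat \<Rightarrow> nat \<Rightarrow> bool" where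
  "three_partition_instance n m B \<longleftrightarrow> 0 < m \<and>
     (\<Sum>i=1..3*m. n i) = m * B \<and>
     (\<forall>i\<in>{1..3*m}. B < 4 * n i \<and> 2 * n i < B) \<and>
     (\<forall>i j. 1 \<le> i \<longrightarrow> i \<le> j \<longrightarrow> j \<le> 3*m \<longrightarrow> n j \<le> n i)"

definition U :: "nat \<Rightarrow> sym list" where
  "U l = [A1, A1] @ replicate l Bs @ [A2, A2]"

definition vv :: "nat \<Rightarrow> sym list" where
  "vv l = [C1] @ replicate l Xs @ replicate l Ys @ [C2]"

definition DD :: "(nat \<Rightarrow> nat) \<Rightarrow> nat \<Rightarrow> nat \<Rightarrow> sym list" where
  "DD n m k = pw (U (n k)) (3*m - k + 1)"

definition EE :: "(nat \<Rightarrow> nat) \<Rightarrow> nat \<Rightarrow> nat \<Rightarrow> nat \<Rightarrow> sym list" where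
  "EE n m B k = pw (U B) (3*m - k) @ [A1] @ replicate (n k) Bs @ [A2] @ pw (U B) (3*m - k)"

definition FF :: "nat \<Rightarrow> nat \<Rightarrow> nat \<Rightarrow> sym list" where
  "FF m B k = pw (U B) (2 * (3*m - k))"

definition Load :: "nat \<Rightarrow> nat \<Rightarrow> sym list" where
  "Load m B = E0 # pw (replicate (2*B) Bs @ [Ee]) m"

definition triple :: "nat \<Rightarrow> sym list" where
  "triple B = pw ([A1] @ replicate B Bs @ [A2]) 3"

definition Dist :: "nat \<Rightarrow> nat \<Rightarrow> sym list" where
  "Dist m B = E0 # pw (triple B @ [Ee]) m"

definition Ver :: "(nat \<Rightarrow> nat) \<Rightarrow> nat \<Rightarrow> nat \<Rightarrow> sym list" where
  "Ver n m B = concat (map (\<lambda>k.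
       vv (4*k-3) @ DD n m k @ vv (4*k-3) @
       vv (4*k-2) @ DD n m k @ vv (4*k-2) @
       vv (4*k-1) @ EE n m B k @ vv (4*k-1) @
       vv (4*k) @ FF m B k @ vv (4*k)) [1..<3*m+1])"

definition wS :: "(nat \<Rightarrow> nat) \<Rightarrow> nat \<Rightarrow> nat \<Rightarrow> sym list" where
  "wS n m B = Load m B @ Dist m B @ Ver n m B"

end

theory Submission
  imports Defs
begin

text \<open>Every step consumes one input symbol, so configuration t of a run on w has remaining input
  drop t w. Since an accepting run ends with an empty queue and every queued symbol can only leave by
  matching a later input symbol, no symbol is ever more frequent in the queue than in the remaining
  input. This counting bound forces the two markers: reading the e0 of Dist must pop the e0 of Load,
  and reading each e of Dist must pop an e of the queue. While the symbols of Load are read, the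
  queue head is e0, which Load never repeats, so everything is pushed; while a block (a1 b^B a2)^3,
  which contains no e, is read, only the b's in front of the next e can be popped, and since the
  closing e must then be matched, all of b^{2B} is popped by that block.\<close>

lemma pw_0 [simp]: "pw u 0 = []"
  by (simp add: pw_def)

lemma pw_Suc: "pw u (Suc k) = u @ pw u k"
  by (simp add: pw_def)

lemma pw_add: "pw u (k + l) = pw u k @ pw u l"
  by (simp add: pw_def replicate_add)

lemma length_pw [simp]: "length (pw u k) = k * length u"
  by (induction k) (simp_all add: pw_Suc)

lemma set_pw_subset: "set (pw u k) \<subseteq> set u"
  by (auto simp: pw_def)

lemma count_list_pw [simp]: "count_list (pw u k) x = k * count_list u x"
  by (induction k) (simp_all add: pw_Suc)

lemma pw_split_at:
  assumes "1 \<le> i" "i \<le> k"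
  shows "pw u k = pw u (i - 1) @ u @ pw u (k - i)"
  using pw_add[of u "i - 1" "Suc (k - i)"] assms by (simp add: pw_Suc)

lemma pw_diff_Suc: "j < k \<Longrightarrow> pw u (k - j) = u @ pw u (k - Suc j)"
  by (metis Suc_diff_Suc pw_Suc)

lemma drop_length_pw:
  assumes "j \<le> k"
  shows "drop (length (pw u j)) (pw u k @ r) = pw u (k - j) @ r"
  using pw_add[of u j "k - j"] assms by simp

lemma drop_eq_ConsD:
  assumes "drop t w = x # r"
  shows "t < length w" "w ! t = x" "drop (Suc t) w = r"
proof -
  show t: "t < length w"
    using assms by (metis drop_eq_Nil2 list.distinct(1) not_le_imp_less)
  show "w ! t = x" using assms by (rule nth_via_drop)
  show "drop (Suc t) w = r"
    using assms Cons_nth_drop_Suc[OF t] by simp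
qed

lemma drop_after_prefix: "drop t xs = s @ r \<Longrightarrow> drop (t + length s) xs = r"
  by (metis add.commute append_eq_conv_conj drop_drop)

lemma qstep_iff:
  "qstep c c' \<longleftrightarrow>
     (\<exists>\<sigma>. snd c = \<sigma> # snd c' \<and> (fst c' = fst c @ [\<sigma>] \<or> fst c = \<sigma> # fst c'))"
  by (cases c; cases c') (auto elim: qstep.cases intro: qstep.intros)

locale accepting_run =
  fixes w :: "sym list" and cs :: "config list"
  assumes accepting: "accepting_computation w cs"
begin

lemma steps: "Suc t < length cs \<Longrightarrow> qstep (cs ! t) (cs ! Suc t)"
  and nonempty: "cs \<noteq> []"
  using accepting by (simp_all add: accepting_computation_def is_computation_def)

lemma input_eq_drop: "t < length cs \<Longrightarrow> snd (cs ! t) = drop t w"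
proof (induction t)
  case 0
  then show ?case
    using accepting by (simp add: accepting_computation_def hd_conv_nth[symmetric])
next
  case (Suc t)
  then show ?case
    using steps[of t] by (auto simp: qstep_iff drop_Suc tl_drop[symmetric])
qed

lemma config_eq: "t < length cs \<Longrightarrow> cs ! t = (fst (cs ! t), drop t w)"
  using input_eq_drop by (metis prod.collapse)

lemma queue_start: "fst (cs ! 0) = []"
  using accepting nonempty by (simp add: accepting_computation_def hd_conv_nth[symmetric])

lemma length_input_less: "length w < length cs"
proof -
  have "snd (cs ! (length cs - 1)) = []"
    using accepting nonempty by (simp add: accepting_computation_def last_conv_nth)
  then have "drop (length cs - 1) w = []"
    using input_eq_drop nonempty by simp
  then show ?thesis
    using nonempty by (cases cs) auto
qed

lemma queue_step:
  assumes "t < length w"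
  shows "fst (cs ! Suc t) = fst (cs ! t) @ [w ! t] \<or> fst (cs ! t) = w ! t # fst (cs ! Suc t)"
proof -
  have "Suc t < length cs"
    using assms length_input_less by simp
  then show ?thesis
    using steps[of t] input_eq_drop[of t] assms by (auto simp: qstep_iff nth_via_drop)
qed

lemma count_queue_le_input:
  assumes "t < length cs"
  shows "count_list (fst (cs ! t)) x \<le> count_list (snd (cs ! t)) x"
proof -
  have "t \<le> length cs - 1"
    using assms by simp
  then show ?thesis
  proof (induction rule: inc_induct)
    case base
    then show ?case
      using accepting nonempty by (simp add: accepting_computation_def last_conv_nth)
  next
    case (step t)
    then have "Suc t < length cs"
      by simp
    then show ?case
      using step.IH steps[of t] by (auto simp: qstep_iff)
  qed
qed

lemma forced_match:
  assumes t: "t < length w"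
    and few: "count_list (drop (Suc t) w) (w ! t) \<le> count_list (fst (cs ! t)) (w ! t)"
  shows "fst (cs ! t) = w ! t # fst (cs ! Suc t)"
proof (rule ccontr)
  assume "\<not> ?thesis"
  then have "fst (cs ! Suc t) = fst (cs ! t) @ [w ! t]"
    using queue_step[OF t] by blast
  moreover have "Suc t < length cs"
    using t length_input_less by simp
  ultimately show False
    using count_queue_le_input[of "Suc t" "w ! t"] input_eq_drop[of "Suc t"] few by simp
qed


lemma pushes_while_head_unread:
  assumes "drop t w = s @ r" "\<sigma> \<notin> set s" "fst (cs ! t) = \<sigma> # Q"
  shows "fst (cs ! (t + length s)) = \<sigma> # Q @ s"
  using assms(1,2)
proof (induction s arbitrary: r rule: rev_induct)
  case Nil
  then show ?case
    using assms(3) by simp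
next
  case (snoc x s)
  have IH: "fst (cs ! (t + length s)) = \<sigma> # Q @ s"
    using snoc.IH[of "x # r"] snoc.prems by simp
  have "drop (t + length s) w = x # r"
    using snoc.prems(1) drop_after_prefix[of t w s] by simp
  note next_symbol = drop_eq_ConsD[OF this]
  have "x \<noteq> \<sigma>"
    using snoc.prems(2) by auto
  then show ?case
    using queue_step[OF next_symbol(1)] IH next_symbol(2) by auto
qed

lemma reads_before_marker:
  assumes "drop t w = s @ r" "e \<notin> set s" "fst (cs ! t) = q @ e # R"
  shows "\<exists>k y. set y \<subseteq> set s \<and> fst (cs ! (t + length s)) = drop k q @ e # R @ y"
  using assms(1,2)
proof (induction s arbitrary: r rule: rev_induct)
  case Nil
  then show ?case
    using assms(3) by (intro exI[of _ 0] exI[of _ "[]"]) simp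
next
  case (snoc x s)
  obtain k y where y: "set y \<subseteq> set s"
    and IH: "fst (cs ! (t + length s)) = drop k q @ e # R @ y"
    using snoc.IH[of "x # r"] snoc.prems by auto
  have "drop (t + length s) w = x # r"
    using snoc.prems(1) drop_after_prefix[of t w s] by simp
  note next_symbol = drop_eq_ConsD[OF this]
  have "x \<noteq> e"
    using snoc.prems(2) by auto
  from queue_step[OF next_symbol(1)] show ?case
  proof
    assume "fst (cs ! Suc (t + length s)) = fst (cs ! (t + length s)) @ [w ! (t + length s)]"
    then show ?case
      using IH y next_symbol(2) by (intro exI[of _ k] exI[of _ "y @ [x]"]) auto
  next
    assume pop: "fst (cs ! (t + length s)) = w ! (t + length s) # fst (cs ! Suc (t + length s))"
    have "k < length q"
      using pop IH next_symbol(2) \<open>x \<noteq> e\<close> by (cases "k < length q") auto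
    then have "drop k q = q ! k # drop (Suc k) q"
      by (rule Cons_nth_drop_Suc[symmetric])
    then show ?case
      using pop IH y by (intro exI[of _ "Suc k"] exI[of _ y]) auto
  qed
qed

lemma marker_matched_after:
  assumes input: "drop t w = s @ e # r" and "e \<notin> set s" "e \<notin> set q"
    and queue: "fst (cs ! t) = q @ e # R"
    and few: "count_list r e \<le> Suc (count_list R e)"
  shows "\<exists>y. set y \<subseteq> set s \<and> fst (cs ! (t + length s)) = e # R @ y
             \<and> fst (cs ! Suc (t + length s)) = R @ y"
proof -
  obtain k y where y: "set y \<subseteq> set s"
    and before: "fst (cs ! (t + length s)) = drop k q @ e # R @ y"
    using reads_before_marker[OF input \<open>e \<notin> set s\<close> queue] by blast
  note marker = drop_eq_ConsD[OF drop_after_prefix[OF input]]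
  have "fst (cs ! (t + length s)) = e # fst (cs ! Suc (t + length s))"
    using forced_match[OF marker(1)] marker(2,3) before few by simp
  moreover have "e \<notin> set (drop k q)"
    using \<open>e \<notin> set q\<close> in_set_dropD by fastforce
  ultimately have "drop k q = []"
    using before by (cases "drop k q") auto
  then show ?thesis
    using before \<open>fst (cs ! (t + length s)) = e # _\<close> y by auto
qed

end

lemma set_triple: "set (triple B) \<subseteq> {A1, A2, Bs}"
  using set_pw_subset[of "[A1] @ replicate B Bs @ [A2]" 3] by (auto simp: triple_def)

lemma set_Ver: "set (Ver n m B) \<subseteq> {A1, A2, Bs, C1, C2, Xs, Ys}"
proof -
  have "set (pw (U l) k) \<subseteq> {A1, A2, Bs, C1, C2, Xs, Ys}" for l k
    using set_pw_subset[of "U l" k] by (auto simp: U_def)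
  moreover have "set (vv l) \<subseteq> {A1, A2, Bs, C1, C2, Xs, Ys}" for l
    by (auto simp: vv_def)
  ultimately have "set (vv (4*k-3) @ DD n m k @ vv (4*k-3) @ vv (4*k-2) @ DD n m k @ vv (4*k-2) @
      vv (4*k-1) @ EE n m B k @ vv (4*k-1) @ vv (4*k) @ FF m B k @ vv (4*k))
      \<subseteq> {A1, A2, Bs, C1, C2, Xs, Ys}" for k
    unfolding DD_def EE_def FF_def set_append by auto
  then show ?thesis
    unfolding Ver_def set_concat set_map by blast
qed

locale accepting_wS_run = accepting_run "wS n m B" cs
  for n :: "nat \<Rightarrow> nat" and m B :: nat and cs :: "config list"
begin

definition block_start :: "nat \<Rightarrow> nat" where
  "block_start j = Suc (length (Load m B)) + length (pw (triple B @ [Ee]) j)"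

lemma input_after_Load:
  "drop (length (Load m B)) (wS n m B) = E0 # pw (triple B @ [Ee]) m @ Ver n m B"
  by (simp add: wS_def Dist_def)

lemma no_marker_after_Load: "E0 \<notin> set (pw (replicate (2*B) Bs @ [Ee]) m)"
  and no_marker_in_blocks: "Ee \<notin> set (triple B)" "E0 \<notin> set (triple B)"
  and no_marker_in_Ver: "Ee \<notin> set (Ver n m B)" "E0 \<notin> set (Ver n m B)"
  using set_pw_subset[of "replicate (2*B) Bs @ [Ee]" m] set_triple[of B] set_Ver[of n m B]
  by auto

lemma queue_after_Load: "fst (cs ! length (Load m B)) = Load m B"
proof -
  define loaded where "loaded = pw (replicate (2*B) Bs @ [Ee]) m"
  have input: "drop 0 (wS n m B) = E0 # loaded @ Dist m B @ Ver n m B"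
    by (simp add: wS_def Load_def loaded_def)
  note first = drop_eq_ConsD[OF input]
  have "fst (cs ! 1) = E0 # []"
    using queue_step[OF first(1)] queue_start first(2) by auto
  moreover have "drop 1 (wS n m B) = loaded @ Dist m B @ Ver n m B"
    using first(3) by simp
  ultimately have "fst (cs ! (1 + length loaded)) = E0 # loaded"
    using pushes_while_head_unread no_marker_after_Load loaded_def by fastforce
  then show ?thesis
    by (simp add: Load_def loaded_def)
qed

lemma queue_after_Dist_marker:
  "fst (cs ! Suc (length (Load m B))) = pw (replicate (2*B) Bs @ [Ee]) m"
proof -
  note marker = drop_eq_ConsD[OF input_after_Load]
  have "count_list (pw (triple B @ [Ee]) m @ Ver n m B) E0 = 0"
    using no_marker_in_blocks(2) no_marker_in_Ver(2) by (simp add: count_list_0_iff)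
  then have "fst (cs ! length (Load m B)) = E0 # fst (cs ! Suc (length (Load m B)))"
    using forced_match[OF marker(1), unfolded marker(2,3)] by (simp only: le0)
  then show ?thesis
    using queue_after_Load by (simp add: Load_def)
qed

lemma input_at_block_start:
  assumes "j \<le> m"
  shows "drop (block_start j) (wS n m B) = pw (triple B @ [Ee]) (m - j) @ Ver n m B"
proof -
  have "drop (block_start j) (wS n m B)
      = drop (length (pw (triple B @ [Ee]) j)) (drop (Suc (length (Load m B))) (wS n m B))"
    by (metis block_start_def drop_drop add.commute)
  also have "\<dots> = pw (triple B @ [Ee]) (m - j) @ Ver n m B"
    by (metis drop_eq_ConsD(3)[OF input_after_Load] drop_length_pw[OF assms])
  finally show ?thesis .
qed

lemma block_pops_Load_block:
  assumes j: "j < m" and z: "Ee \<notin> set z"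
    and queue: "fst (cs ! block_start j) = pw (replicate (2*B) Bs @ [Ee]) (m - j) @ z"
  shows "\<exists>y. Ee \<notin> set y \<and>
    fst (cs ! (block_start j + length (triple B)))
      = Ee # pw (replicate (2*B) Bs @ [Ee]) (m - Suc j) @ z @ y \<and>
    fst (cs ! block_start (Suc j)) = pw (replicate (2*B) Bs @ [Ee]) (m - Suc j) @ z @ y"
proof -
  have input: "drop (block_start j) (wS n m B)
      = triple B @ Ee # pw (triple B @ [Ee]) (m - Suc j) @ Ver n m B"
    using input_at_block_start[of j] j pw_diff_Suc[OF j, of "triple B @ [Ee]"] by simp
  have queue': "fst (cs ! block_start j)
      = replicate (2*B) Bs @ Ee # pw (replicate (2*B) Bs @ [Ee]) (m - Suc j) @ z"
    using queue pw_diff_Suc[OF j, of "replicate (2*B) Bs @ [Ee]"] by simp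
  have "count_list (pw (triple B @ [Ee]) (m - Suc j) @ Ver n m B) Ee
      \<le> Suc (count_list (pw (replicate (2*B) Bs @ [Ee]) (m - Suc j) @ z) Ee)"
    using no_marker_in_blocks(1) no_marker_in_Ver(1) z by (simp add: count_list_0_iff)
  then obtain y where "set y \<subseteq> set (triple B)"
    and "fst (cs ! (block_start j + length (triple B)))
      = Ee # pw (replicate (2*B) Bs @ [Ee]) (m - Suc j) @ z @ y"
    and "fst (cs ! Suc (block_start j + length (triple B)))
      = pw (replicate (2*B) Bs @ [Ee]) (m - Suc j) @ z @ y"
    using marker_matched_after[OF input no_marker_in_blocks(1) _ queue'] by auto
  moreover have "block_start (Suc j) = Suc (block_start j + length (triple B))"
    by (simp add: block_start_def)
  ultimately show ?thesis
    using no_marker_in_blocks(1) by auto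
qed

lemma queue_at_block_start:
  "j \<le> m \<Longrightarrow>
    \<exists>z. Ee \<notin> set z \<and> fst (cs ! block_start j) = pw (replicate (2*B) Bs @ [Ee]) (m - j) @ z"
proof (induction j)
  case 0
  then show ?case
    using queue_after_Dist_marker by (simp add: block_start_def)
next
  case (Suc j)
  then obtain z where "Ee \<notin> set z"
    and "fst (cs ! block_start j) = pw (replicate (2*B) Bs @ [Ee]) (m - j) @ z"
    by auto
  then show ?case
    using block_pops_Load_block[of j z] Suc.prems by fastforce
qed

lemma config_after_Load: "cs ! length (Load m B) = (Load m B, Dist m B @ Ver n m B)"
proof -
  have "length (Load m B) < length cs"
    using length_input_less by (simp add: wS_def)
  then have "cs ! length (Load m B)
      = (fst (cs ! length (Load m B)), drop (length (Load m B)) (wS n m B))"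
    by (rule config_eq)
  then show ?thesis
    using queue_after_Load by (simp add: wS_def)
qed

lemma block_consumed_by:
  assumes i: "i \<in> {1..m}"
  shows "consumed_by cs
    (E0 # pw (replicate (2*B) Bs @ [Ee]) (i - 1))
    (replicate (2*B) Bs)
    (Ee # pw (replicate (2*B) Bs @ [Ee]) (m - i))
    (E0 # pw (triple B @ [Ee]) (i - 1))
    (triple B)
    (Ee # pw (triple B @ [Ee]) (m - i) @ Ver n m B)"
    (is "consumed_by cs ?u1 ?u2 ?u3 ?x1 ?x2 ?x3")
proof -
  define j where "j = i - 1"
  have j: "j < m" and rest: "m - j = Suc (m - i)" "m - Suc j = m - i"
    using i by (auto simp: j_def)
  have "Load m B = ?u1 @ ?u2 @ ?u3" "Dist m B @ Ver n m B = ?x1 @ ?x2 @ ?x3"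
    using pw_split_at[of i m] i by (simp_all add: Load_def Dist_def)
  then have at_Load: "cs ! length (Load m B) = (?u1 @ ?u2 @ ?u3, ?x1 @ ?x2 @ ?x3)"
    by (intro trans[OF config_after_Load]) simp
  obtain z where z: "Ee \<notin> set z"
    and queue: "fst (cs ! block_start j) = pw (replicate (2*B) Bs @ [Ee]) (m - j) @ z"
    using queue_at_block_start[of j] j by auto
  obtain y where after: "fst (cs ! (block_start j + length (triple B))) = ?u3 @ z @ y"
    using block_pops_Load_block[OF j z queue] rest by auto
  have input: "drop (block_start j) (wS n m B) = ?x2 @ ?x3"
    using input_at_block_start[of j] j rest by (simp add: pw_Suc)
  then have in_run: "block_start j + length (triple B) < length cs"
    using drop_eq_ConsD(1)[OF drop_after_prefix[OF input]] length_input_less by simp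
  then have at_block: "cs ! block_start j = (?u2 @ ?u3 @ z, ?x2 @ ?x3)"
    using config_eq[of "block_start j"] queue rest input by (simp add: pw_Suc)
  have after_block: "cs ! (block_start j + length (triple B)) = (?u3 @ z @ y, ?x3)"
    using config_eq[OF in_run] after drop_after_prefix[OF input] by simp
  have "length (Load m B) \<le> block_start j"
    by (simp add: block_start_def)
  then show ?thesis
    unfolding consumed_by_def using in_run at_Load at_block after_block
    by (intro exI[of _ "length (Load m B)"] exI[of _ "block_start j"]
        exI[of _ "block_start j + length (triple B)"] exI[of _ z] exI[of _ y]) simp
qed

end

theorem lemma3:
  fixes n :: "nat \<Rightarrow> nat" and m B :: nat and cs :: "config list"
  assumes inst: "three_partition_instance n m B"
    and acc: "accepting_computation (wS n m B) cs"
  shows "(\<exists>j < length cs. cs ! j = (Load m B, Dist m B @ Ver n m B)) \<and>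
         (\<forall>i\<in>{1..m}.
            consumed_by cs
              (E0 # pw (replicate (2*B) Bs @ [Ee]) (i - 1))
              (replicate (2*B) Bs)
              (Ee # pw (replicate (2*B) Bs @ [Ee]) (m - i))
              (E0 # pw (triple B @ [Ee]) (i - 1))
              (triple B)
              (Ee # pw (triple B @ [Ee]) (m - i) @ Ver n m B))"
proof -
  interpret accepting_wS_run n m B cs
    using acc by unfold_locales
  have "length (Load m B) < length cs"
    using length_input_less by (simp add: wS_def)
  then show ?thesis
    using config_after_Load block_consumed_by by blast
qed

end
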